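(* There exist a Banach algebra $A$ which is not nilpotent and a Banach $A$-bimodule $X$ such that $Mul_{2}(A,X)\subsetneq Mul_{3}(A,X)$.
   Context: A Banach algebra $A$ is nilpotent if there is $n\ge 2$ with $a_1a_2\cdots a_n=0$ for all $a_1,\dots,a_n\in A$. For $n\ge 2$, a bounded linear map $T:A\to X$ into a Banach $A$-bimodule is an $n$-multiplier if $T(a_1\cdots a_n)=a_1\cdot T(a_2\cdots a_n)=T(a_1\cdots a_{n-1})\cdot a_n$ for all $a_i\in A$; $Mul_n(A,X)$ is the set of all $n$-multipliers. *)

theory Defs
  imports "HOL-Analysis.Analysis"
begin

text \<open>Complex Banach spaces: the underlying type carries the (real) Banach space
  structure (norm, completeness); sm is a complex scalar multiplication extending
  the real one and compatible with the norm.\<close>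
definition complex_banach_space :: "(complex \<Rightarrow> 'a::{real_normed_vector,banach} \<Rightarrow> 'a) \<Rightarrow> bool" where
  "complex_banach_space sm \<longleftrightarrow>
     (\<forall>c x y. sm c (x + y) = sm c x + sm c y) \<and>
     (\<forall>c d x. sm (c + d) x = sm c x + sm d x) \<and>
     (\<forall>c d x. sm (c * d) x = sm c (sm d x)) \<and>
     (\<forall>r x. sm (complex_of_real r) x = r *\<^sub>R x) \<and>
     (\<forall>c x. norm (sm c x) = cmod c * norm x)"

definition cbounded_linear ::
  "(complex \<Rightarrow> 'a::real_normed_vector \<Rightarrow> 'a) \<Rightarrow> (complex \<Rightarrow> 'b::real_normed_vector \<Rightarrow> 'b) \<Rightarrow> ('a \<Rightarrow> 'b) \<Rightarrow> bool" where
  "cbounded_linear smA smB f \<longleftrightarrow> bounded_linear f \<and> (\<forall>c x. f (smA c x) = smB c (f x))"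

definition banach_algebra ::
  "(complex \<Rightarrow> 'a::{real_normed_vector,banach} \<Rightarrow> 'a) \<Rightarrow> ('a \<Rightarrow> 'a \<Rightarrow> 'a) \<Rightarrow> bool" where
  "banach_algebra smA mul \<longleftrightarrow>
     complex_banach_space smA \<and> bounded_bilinear mul \<and>
     (\<forall>c a b. mul (smA c a) b = smA c (mul a b) \<and> mul a (smA c b) = smA c (mul a b)) \<and>
     (\<forall>a b c. mul (mul a b) c = mul a (mul b c)) \<and>
     (\<forall>a b. norm (mul a b) \<le> norm a * norm b)"

definition banach_bimodule ::
  "(complex \<Rightarrow> 'a::{real_normed_vector,banach} \<Rightarrow> 'a) \<Rightarrow> ('a \<Rightarrow> 'a \<Rightarrow> 'a) \<Rightarrow>
   (complex \<Rightarrow> 'x::{real_normed_vector,banach} \<Rightarrow> 'x) \<Rightarrow> ('a \<Rightarrow> 'x \<Rightarrow> 'x) \<Rightarrow> ('x \<Rightarrow> 'a \<Rightarrow> 'x) \<Rightarrow> bool" where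
  "banach_bimodule smA mul smX lft rgt \<longleftrightarrow>
     complex_banach_space smX \<and> bounded_bilinear lft \<and> bounded_bilinear rgt \<and>
     (\<forall>c a x. lft (smA c a) x = smX c (lft a x) \<and> lft a (smX c x) = smX c (lft a x)) \<and>
     (\<forall>c a x. rgt (smX c x) a = smX c (rgt x a) \<and> rgt x (smA c a) = smX c (rgt x a)) \<and>
     (\<forall>a b x. lft (mul a b) x = lft a (lft b x)) \<and>
     (\<forall>a b x. rgt x (mul a b) = rgt (rgt x a) b) \<and>
     (\<forall>a b x. lft a (rgt x b) = rgt (lft a x) b)"

fun mprod :: "('a \<Rightarrow> 'a \<Rightarrow> 'a) \<Rightarrow> 'a \<Rightarrow> 'a list \<Rightarrow> 'a" where
  "mprod m x [] = x"
| "mprod m x (y # ys) = m x (mprod m y ys)"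

definition nilpotent_alg :: "('a::zero \<Rightarrow> 'a \<Rightarrow> 'a) \<Rightarrow> bool" where
  "nilpotent_alg mul \<longleftrightarrow> (\<exists>n\<ge>2. \<forall>a as. length as = n - 1 \<longrightarrow> mprod mul a as = 0)"

text \<open>n-multipliers: T(a1...an) = a1.T(a2...an) = T(a1...a(n-1)).an,
  with a1 = a, (a2,...,a(n-1)) = bs, an = c.\<close>
definition Mul ::
  "(complex \<Rightarrow> 'a::real_normed_vector \<Rightarrow> 'a) \<Rightarrow> ('a \<Rightarrow> 'a \<Rightarrow> 'a) \<Rightarrow>
   (complex \<Rightarrow> 'x::real_normed_vector \<Rightarrow> 'x) \<Rightarrow> ('a \<Rightarrow> 'x \<Rightarrow> 'x) \<Rightarrow> ('x \<Rightarrow> 'a \<Rightarrow> 'x) \<Rightarrow>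
   nat \<Rightarrow> ('a \<Rightarrow> 'x) set" where
  "Mul smA mul smX lft rgt n = {T. cbounded_linear smA smX T \<and>
     (\<forall>a bs c. length bs = n - 2 \<longrightarrow>
        T (mprod mul a (bs @ [c])) = lft a (T (mprod mul (hd (bs @ [c])) (tl (bs @ [c])))) \<and>
        T (mprod mul a (bs @ [c])) = rgt (T (mprod mul a bs)) c)}"

end

theory Submission
  imports Defs
begin

text \<open>
  The module is the scalar field \<open>X = \<complex>\<close> with both actions zero.  For such a
  trivial bimodule an n-multiplier is just a bounded linear functional vanishing
  on all n-fold products, so \<open>Mul\<^sub>2 \<subseteq> Mul\<^sub>3\<close> holds for every associative
  algebra, and strictness amounts to a functional killing all triple products
  but not all double products.

  The algebra is \<open>A = \<complex>\<^sup>4\<close> with product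
  \<open>a \<cdot> b = (a\<^sub>1b\<^sub>1, 0, a\<^sub>2b\<^sub>2, 0)\<close>: the idempotent \<open>e\<^sub>1\<close> makes
  \<open>A\<close> non-nilpotent, while every triple product has third coordinate zero although
  \<open>e\<^sub>2 \<cdot> e\<^sub>2 = e\<^sub>3\<close>.  The third coordinate functional is therefore a
  3-multiplier that is not a 2-multiplier.
\<close>

lemma complex_banach_space_vec:
  "complex_banach_space ((*s) :: complex \<Rightarrow> complex^'n \<Rightarrow> complex^'n)"
  unfolding complex_banach_space_def
proof (intro conjI allI)
  fix c :: complex and x :: "complex^'n"
  have "norm (c *s x) = L2_set (\<lambda>i. cmod c * cmod (x$i)) UNIV"
    by (simp add: norm_vec_def norm_mult)
  also have "\<dots> = cmod c * norm x"
    by (simp add: norm_vec_def L2_set_right_distrib)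
  finally show "norm (c *s x) = cmod c * norm x" .
next
  fix r :: real and x :: "complex^'n"
  show "complex_of_real r *s x = r *\<^sub>R x"
    by (simp add: vec_eq_iff) (simp add: scaleR_conv_of_real)
qed (auto simp: vec_eq_iff algebra_simps)

lemma complex_banach_space_complex: "complex_banach_space (\<lambda>c z. c * (z::complex))"
  unfolding complex_banach_space_def
  by (auto simp: algebra_simps norm_mult scaleR_conv_of_real)

lemma trivial_banach_bimodule:
  fixes smA :: "complex \<Rightarrow> 'a::{real_normed_vector,banach} \<Rightarrow> 'a"
    and smX :: "complex \<Rightarrow> 'x::{real_normed_vector,banach} \<Rightarrow> 'x"
  assumes "complex_banach_space smX"
  shows "banach_bimodule smA mul smX (\<lambda>a x. 0) (\<lambda>x a. 0)"
proof -
  have "norm (smX c 0) = 0" for c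
    using assms by (simp add: complex_banach_space_def)
  then have "\<And>c. smX c 0 = 0" by simp
  moreover have "bounded_bilinear (\<lambda>(a::'a) (x::'x). 0::'x)"
    and "bounded_bilinear (\<lambda>(x::'x) (a::'a). 0::'x)"
    by (standard; auto intro: exI[of _ 0])+
  ultimately show ?thesis
    using assms unfolding banach_bimodule_def by auto
qed

lemma Mul_trivial:
  fixes smA :: "complex \<Rightarrow> 'a::real_normed_vector \<Rightarrow> 'a"
    and smX :: "complex \<Rightarrow> 'x::real_normed_vector \<Rightarrow> 'x"
  assumes "n \<ge> 2"
  shows "Mul smA mul smX (\<lambda>a x. 0) (\<lambda>x a. 0) n =
    {T. cbounded_linear smA smX T \<and> (\<forall>a bs. length bs = n - 1 \<longrightarrow> T (mprod mul a bs) = 0)}"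
proof -
  have "(\<forall>a bs c. length bs = n - 2 \<longrightarrow> T (mprod mul a (bs @ [c])) = 0) \<longleftrightarrow>
        (\<forall>a bs. length bs = n - 1 \<longrightarrow> T (mprod mul a bs) = 0)" for T :: "'a \<Rightarrow> 'x"
  proof safe
    fix a :: 'a and bs :: "'a list"
    assume vanish: "\<forall>a bs c. length bs = n - 2 \<longrightarrow> T (mprod mul a (bs @ [c])) = 0"
      and len: "length bs = n - 1"
    have "bs \<noteq> []" and "length (butlast bs) = n - 2"
      using len assms by auto
    then have "T (mprod mul a (butlast bs @ [last bs])) = 0"
      using vanish by blast
    with \<open>bs \<noteq> []\<close> show "T (mprod mul a bs) = 0" by simp
  next
    fix a c :: 'a and bs :: "'a list"
    assume vanish: "\<forall>a bs. length bs = n - 1 \<longrightarrow> T (mprod mul a bs) = 0"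
      and len: "length bs = n - 2"
    have "length (bs @ [c]) = n - 1"
      using len assms by simp
    with vanish show "T (mprod mul a (bs @ [c])) = 0" by blast
  qed
  then show ?thesis
    unfolding Mul_def by auto
qed

lemma mprod_mult_left:
  assumes "\<forall>a b c. mul (mul a b) c = mul a (mul b c)"
  shows "mprod mul (mul a b) bs = mul a (mprod mul b bs)"
  using assms by (cases bs) auto

text \<open>Over an associative algebra, every n-multiplier of a trivial bimodule is
  an (n+1)-multiplier: an (n+1)-fold product is an n-fold one.\<close>
lemma Mul_trivial_mono:
  fixes smA :: "complex \<Rightarrow> 'a::real_normed_vector \<Rightarrow> 'a"
    and smX :: "complex \<Rightarrow> 'x::real_normed_vector \<Rightarrow> 'x"
  assumes assoc: "\<forall>a b c. mul (mul a b) c = mul a (mul b c)" and "n \<ge> 2"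
  shows "Mul smA mul smX (\<lambda>a x. 0) (\<lambda>x a. 0) n \<subseteq> Mul smA mul smX (\<lambda>a x. 0) (\<lambda>x a. 0) (Suc n)"
proof -
  have "T (mprod mul a bs) = 0"
    if vanish: "\<forall>a bs. length bs = n - 1 \<longrightarrow> T (mprod mul a bs) = 0" and "length bs = n"
    for T :: "'a \<Rightarrow> 'x" and a bs
  proof -
    obtain b bs' where "bs = b # bs'" and "length bs' = n - 1"
      using \<open>length bs = n\<close> \<open>n \<ge> 2\<close> by (cases bs) auto
    then have "mprod mul a bs = mprod mul (mul a b) bs'"
      by (simp add: mprod_mult_left[OF assoc])
    with vanish \<open>length bs' = n - 1\<close> show ?thesis by simp
  qed
  then show ?thesis
    using \<open>n \<ge> 2\<close> by (auto simp: Mul_trivial)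
qed

lemma mprod_idempotent:
  assumes "mul e e = e"
  shows "mprod mul e (replicate k e) = e"
  using assms by (induction k) auto

lemma idempotent_not_nilpotent:
  fixes mul :: "'a::zero \<Rightarrow> 'a \<Rightarrow> 'a"
  assumes "mul e e = e" and "e \<noteq> 0"
  shows "\<not> nilpotent_alg mul"
proof
  assume "nilpotent_alg mul"
  then obtain n where "\<forall>a as. length as = n - 1 \<longrightarrow> mprod mul a as = 0"
    unfolding nilpotent_alg_def by blast
  then have "mprod mul e (replicate (n - 1) e) = 0" by simp
  with assms show False by (simp add: mprod_idempotent)
qed

definition ex_mul :: "complex^4 \<Rightarrow> complex^4 \<Rightarrow> complex^4" where
  "ex_mul a b = (\<chi> i. if i = 1 then a$1 * b$1 else if i = 3 then a$2 * b$2 else 0)"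

lemma ex_mul_nth [simp]:
  "ex_mul a b $ 1 = a$1 * b$1" "ex_mul a b $ 2 = 0"
  "ex_mul a b $ 3 = a$2 * b$2" "ex_mul a b $ 4 = 0"
  by (simp_all add: ex_mul_def)

lemma vec4_eq_iff: "(x::'a^4) = y \<longleftrightarrow> x$1 = y$1 \<and> x$2 = y$2 \<and> x$3 = y$3 \<and> x$4 = y$4"
  unfolding vec_eq_iff forall_4 ..

lemma norm_vec4: "norm (x::complex^4) = sqrt ((cmod (x$1))\<^sup>2 + (cmod (x$2))\<^sup>2 + (cmod (x$3))\<^sup>2 + (cmod (x$4))\<^sup>2)"
  by (simp add: norm_vec_def L2_set_def sum_4)

text \<open>Submultiplicativity: the two surviving coordinate products are dominated by
  the full product of the squared norms.\<close>
lemma norm_ex_mul: "norm (ex_mul a b) \<le> norm a * norm b"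
proof -
  define p q r s where a_coords: "p = cmod (a$1)" "q = cmod (a$2)" "r = cmod (a$3)" "s = cmod (a$4)"
  define p' q' r' s' where b_coords: "p' = cmod (b$1)" "q' = cmod (b$2)" "r' = cmod (b$3)" "s' = cmod (b$4)"
  have "norm (ex_mul a b) = sqrt ((p * p')\<^sup>2 + (q * q')\<^sup>2)"
    by (simp add: norm_vec4 norm_mult a_coords b_coords)
  also have "\<dots> \<le> sqrt ((p\<^sup>2 + q\<^sup>2 + r\<^sup>2 + s\<^sup>2) * (p'\<^sup>2 + q'\<^sup>2 + r'\<^sup>2 + s'\<^sup>2))"
    by (rule real_sqrt_le_mono) (simp add: power_mult_distrib algebra_simps)
  also have "\<dots> = norm a * norm b"
    by (simp add: norm_vec4 real_sqrt_mult a_coords b_coords)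
  finally show ?thesis .
qed

lemma banach_algebra_ex: "banach_algebra (*s) ex_mul"
proof -
  have "bounded_bilinear ex_mul"
  proof
    show "\<exists>K. \<forall>a b. norm (ex_mul a b) \<le> norm a * norm b * K"
      using norm_ex_mul by (intro exI[of _ 1]) simp
  qed (auto simp: vec4_eq_iff algebra_simps)
  then show ?thesis
    unfolding banach_algebra_def
    using complex_banach_space_vec norm_ex_mul by (auto simp: vec4_eq_iff algebra_simps)
qed

text \<open>The first unit vector is a nonzero idempotent.\<close>
lemma ex_not_nilpotent: "\<not> nilpotent_alg ex_mul"
  by (rule idempotent_not_nilpotent[of _ "axis 1 1"]) (auto simp: vec4_eq_iff axis_def)

lemma ex_coord3_cbounded_linear: "cbounded_linear (*s) (\<lambda>c z. c * z) (\<lambda>x::complex^4. x$3)"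
  by (simp add: cbounded_linear_def bounded_linear_vec_nth)

lemma ex_coord3_triple: "ex_mul a (ex_mul b c) $ 3 = 0"
  by simp

lemma ex_coord3_square: "ex_mul (axis 2 1) (axis 2 1) $ 3 \<noteq> 0"
  by (simp add: axis_def)

theorem theorem2p6:
  shows "\<exists>(smA :: complex \<Rightarrow> complex^4 \<Rightarrow> complex^4) (mul :: complex^4 \<Rightarrow> complex^4 \<Rightarrow> complex^4)
           (smX :: complex \<Rightarrow> complex \<Rightarrow> complex) (lft :: complex^4 \<Rightarrow> complex \<Rightarrow> complex)
           (rgt :: complex \<Rightarrow> complex^4 \<Rightarrow> complex).
     banach_algebra smA mul \<and> \<not> nilpotent_alg mul \<and>
     banach_bimodule smA mul smX lft rgt \<and>
     Mul smA mul smX lft rgt 2 \<subset> Mul smA mul smX lft rgt 3"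
proof (intro exI conjI)
  let ?Mul = "Mul (*s) ex_mul (\<lambda>c z. c * z) (\<lambda>a x. 0) (\<lambda>x a. 0)"
  show "banach_algebra (*s) ex_mul" by (rule banach_algebra_ex)
  show "\<not> nilpotent_alg ex_mul" by (rule ex_not_nilpotent)
  show "banach_bimodule (*s) ex_mul (\<lambda>c z. c * z) (\<lambda>a x. 0) (\<lambda>x a. 0)"
    by (rule trivial_banach_bimodule[OF complex_banach_space_complex])
  have assoc: "\<forall>a b c. ex_mul (ex_mul a b) c = ex_mul a (ex_mul b c)"
    using banach_algebra_ex unfolding banach_algebra_def by blast
  have "?Mul 2 \<subseteq> ?Mul 3"
    using Mul_trivial_mono[OF assoc, of 2] by (simp add: numeral_3_eq_3)
  moreover have "(\<lambda>x. x$3) \<in> ?Mul 3"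
  proof -
    have "mprod ex_mul a bs $ 3 = 0" if len: "length bs = 3 - 1" for a bs
    proof -
      obtain b c where "bs = [b, c]"
        using len by (auto simp: length_Suc_conv numeral_2_eq_2)
      then show ?thesis by (simp add: ex_coord3_triple)
    qed
    then show ?thesis
      using ex_coord3_cbounded_linear by (simp add: Mul_trivial)
  qed
  moreover have "(\<lambda>x. x$3) \<notin> ?Mul 2"
  proof -
    have "mprod ex_mul (axis 2 1) [axis 2 1] $ 3 \<noteq> 0" and "length [axis 2 (1::complex)] = 2 - 1"
      using ex_coord3_square by simp_all
    then show ?thesis
      unfolding Mul_trivial[OF order_refl] by blast
  qed
  ultimately show "?Mul 2 \<subset> ?Mul 3" by blast
qed

end
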